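(* Let $\alpha=2\sqrt7-4$. Fix $\varepsilon>0$ and let $\delta=3\varepsilon/8$. For every balanced tetrahedral erasure channel $W$ with $Q(W)\le\alpha-\varepsilon$, we have $Q(W^{s})\ge Q(W)\bigl(1+H(W)\delta\bigr)$ and $Q(W^{p})\ge Q(W)\bigl(1+(1-H(W))\delta\bigr)$.
   Context: $\mathrm{TEC}(p,q,r,s,t)$ denotes a tetrahedral erasure channel with parameters $p,q,r,s,t\ge0$ summing to $1$. Its entropy is $H=\frac{q+r+s}{2}+t$, its edge mass is $E=q+r+s$, and its Quetelet index is $Q=E/(H(1-H))$ (defined when $0<H<1$). It is balanced if $q=r=s$. For $W=\mathrm{TEC}(p,q,r,s,t)$, the serial child is $W^{s}=\mathrm{TEC}(p^2,\ ps+sq+qp,\ pq+qr+rp,\ pr+rs+sp,\ 1-\text{(sum of the other four)})$ and the parallel child is $W^{p}=\mathrm{TEC}(1-\text{(sum of the other four)},\ ts+sq+qt,\ tq+qr+rt,\ tr+rs+st,\ t^2)$. *)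

theory Defs
  imports Complex_Main
begin

type_synonym tec = "real \<times> real \<times> real \<times> real \<times> real"

definition is_tec :: "tec \<Rightarrow> bool" where
  "is_tec W = (case W of (p,q,r,s,t) \<Rightarrow>
     p \<ge> 0 \<and> q \<ge> 0 \<and> r \<ge> 0 \<and> s \<ge> 0 \<and> t \<ge> 0 \<and> p + q + r + s + t = 1)"

definition tec_H :: "tec \<Rightarrow> real" where
  "tec_H W = (case W of (p,q,r,s,t) \<Rightarrow> (q + r + s) / 2 + t)"

definition tec_E :: "tec \<Rightarrow> real" where
  "tec_E W = (case W of (p,q,r,s,t) \<Rightarrow> q + r + s)"

text \<open>Quetelet index; only meaningful when 0 < H < 1.\<close>
definition tec_Q :: "tec \<Rightarrow> real" where
  "tec_Q W = tec_E W / (tec_H W * (1 - tec_H W))"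

definition balanced :: "tec \<Rightarrow> bool" where
  "balanced W = (case W of (p,q,r,s,t) \<Rightarrow> q = r \<and> r = s)"

definition serial :: "tec \<Rightarrow> tec" where
  "serial W = (case W of (p,q,r,s,t) \<Rightarrow>
     (let p' = p^2; q' = p*s + s*q + q*p; r' = p*q + q*r + r*p; s' = p*r + r*s + s*p
      in (p', q', r', s', 1 - (p' + q' + r' + s'))))"

definition parallel :: "tec \<Rightarrow> tec" where
  "parallel W = (case W of (p,q,r,s,t) \<Rightarrow>
     (let q' = t*s + s*q + q*t; r' = t*q + q*r + r*t; s' = t*r + r*s + s*t; t' = t^2
      in (1 - (q' + r' + s' + t'), q', r', s', t')))"

end

(* For a balanced channel the serial child depends only on h = H(W) and e = E(W):
   E(W^s) = 2e(1 - h - e/3) and 1 - H(W^s) = (1 - h)^2 - e^2/12.  Writing e = Q h (1 - h), the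
   claimed growth of Q becomes a polynomial inequality in h and Q, which has an explicit
   certificate of nonnegativity once Q \<le> \<alpha>; the constant \<alpha> = 2 sqrt 7 - 4 is the positive root
   of \<alpha>^2 + 8\<alpha> = 12, which is exactly what the certificate needs.  The parallel child is the
   serial child with the roles of p and t exchanged, an operation that replaces H by 1 - H and
   preserves E and Q. *)
theory Submission
  imports Defs
begin

lemma tec_Q_nonneg:
  assumes "is_tec W"
  shows "0 \<le> tec_Q W"
proof -
  obtain p q r s t where W: "W = (p,q,r,s,t)" by (cases W)
  with assms have "0 \<le> p" "0 \<le> q" "0 \<le> r" "0 \<le> s" "0 \<le> t" "p + q + r + s + t = 1"
    by (simp_all add: is_tec_def)
  then have "0 \<le> tec_E W" "0 \<le> tec_H W" "tec_H W \<le> 1"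
    unfolding W tec_E_def tec_H_def by (simp_all add: field_simps)
  then show ?thesis by (simp add: tec_Q_def)
qed

definition tec_flip :: "tec \<Rightarrow> tec" where
  "tec_flip W = (case W of (p,q,r,s,t) \<Rightarrow> (t,q,r,s,p))"

lemma is_tec_flip: "is_tec W \<Longrightarrow> is_tec (tec_flip W)"
  by (cases W) (auto simp: is_tec_def tec_flip_def)

lemma balanced_flip: "balanced W \<Longrightarrow> balanced (tec_flip W)"
  by (cases W) (simp add: balanced_def tec_flip_def)

lemma tec_H_flip: "is_tec W \<Longrightarrow> tec_H (tec_flip W) = 1 - tec_H W"
  by (cases W) (auto simp: is_tec_def tec_H_def tec_flip_def field_simps)

lemma tec_E_flip: "tec_E (tec_flip W) = tec_E W"
  by (cases W) (simp add: tec_E_def tec_flip_def)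

lemma tec_Q_flip: "is_tec W \<Longrightarrow> tec_Q (tec_flip W) = tec_Q W"
  by (simp add: tec_Q_def tec_E_flip tec_H_flip mult.commute)

lemma parallel_eq_flip_serial_flip: "parallel W = tec_flip (serial (tec_flip W))"
  by (cases W) (simp add: parallel_def serial_def tec_flip_def Let_def algebra_simps)

lemma tec_H_parallel: "tec_H (parallel W) = 1 - tec_H (serial (tec_flip W))"
  by (cases W) (simp add: parallel_def serial_def tec_flip_def tec_H_def Let_def algebra_simps)

lemma tec_Q_parallel: "tec_Q (parallel W) = tec_Q (serial (tec_flip W))"
proof -
  have "tec_E (parallel W) = tec_E (serial (tec_flip W))"
    by (simp add: parallel_eq_flip_serial_flip tec_E_flip)
  then show ?thesis
    by (simp add: tec_Q_def tec_H_parallel mult.commute)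
qed

lemma
  assumes "is_tec W" "balanced W"
  shows tec_E_serial_balanced: "tec_E (serial W) = 2 * tec_E W * (1 - tec_H W - tec_E W / 3)"
    and tec_H_serial_balanced: "1 - tec_H (serial W) = (1 - tec_H W)^2 - (tec_E W)^2 / 12"
proof -
  obtain p a t where W: "W = (p,a,a,a,t)" and sum: "p + 3*a + t = 1"
    using assms by (cases W) (auto simp: balanced_def is_tec_def)
  have t: "t = 1 - p - 3*a" using sum by simp
  show "tec_E (serial W) = 2 * tec_E W * (1 - tec_H W - tec_E W / 3)"
    unfolding W t by (simp add: serial_def tec_E_def tec_H_def Let_def algebra_simps power2_eq_square)
  show "1 - tec_H (serial W) = (1 - tec_H W)^2 - (tec_E W)^2 / 12"
    unfolding W t by (simp add: serial_def tec_E_def tec_H_def Let_def field_simps power2_eq_square)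
qed

lemma quetelet_threshold_bounds:
  fixes A :: real
  assumes "A^2 + 8*A = 12" "0 \<le> A"
  shows "1 \<le> A" "A \<le> 2"
proof -
  have "(A - 1) * (A + 9) \<ge> 0" "(2 - A) * (A + 10) \<ge> 0"
    using assms by (simp_all add: algebra_simps power2_eq_square)
  then show "1 \<le> A" "A \<le> 2"
    using assms(2) by (simp_all add: zero_le_mult_iff)
qed

lemma serial_gain_polynomial_ineq:
  fixes h Q A :: real
  assumes A: "A^2 + 8*A = 12" "0 \<le> A" and h: "0 < h" "h < 1" and Q: "0 \<le> Q" "Q \<le> A"
  shows "(1 - (1-h)^2 * (1 - (Q*h)^2/12)) * (1 - (Q*h)^2/12) * (1 + 3/8*h*(A-Q))
           \<le> 2*h*(1 - Q*h/3)"
proof -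
  define d where "d = A - Q"
  have d: "0 \<le> d" "d \<le> 2" using Q quetelet_threshold_bounds[OF A] by (auto simp: d_def)
  \<comment> \<open>Each summand is nonnegative for 0 \<le> d \<le> 2, except the constant one, which vanishes
    precisely because A^2 + 8A = 12.\<close>
  have certificate: "2*h*(1 - Q*h/3)
      - (1 - (1-h)^2 * (1 - (Q*h)^2/12)) * (1 - (Q*h)^2/12) * (1 + 3/8*h*(A-Q))
    = h^2 * (d*(Q+A-1)/12 + (12 - 8*A - A^2)/12 + 3/8*d*h
        + Q^2*h*((1/3 - h/6) + d*(1/2 - (1-h)^2)/16)
        + Q^4*h^2*(1-h)^2/144 + d*Q^4*h^3*(1-h)^2/384)"
    unfolding d_def by (simp add: field_simps power2_eq_square power4_eq_xxxx) algebra
  have "(1-h)^2 \<le> 1" using h by (simp add: power_le_one)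
  then have "d*(1/2 - (1-h)^2) \<ge> - d/2" using d by (simp add: algebra_simps mult_left_mono)
  then have "(1/3 - h/6) + d*(1/2 - (1-h)^2)/16 \<ge> 0" using d h by linarith
  then have "Q^2*h*((1/3 - h/6) + d*(1/2 - (1-h)^2)/16) \<ge> 0" using h by simp
  moreover have "d*(Q+A-1)/12 \<ge> 0" using d Q quetelet_threshold_bounds[OF A] by simp
  moreover have "(12 - 8*A - A^2)/12 = 0" using A by simp
  moreover have "3/8*d*h \<ge> 0" "d*Q^4*h^3*(1-h)^2/384 \<ge> 0" using d h by simp_all
  ultimately have "0 \<le> 2*h*(1 - Q*h/3)
      - (1 - (1-h)^2 * (1 - (Q*h)^2/12)) * (1 - (Q*h)^2/12) * (1 + 3/8*h*(A-Q))"
    unfolding certificate by (intro mult_nonneg_nonneg) auto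
  then show ?thesis by simp
qed

lemma tec_Q_serial_balanced_ge:
  fixes A :: real
  assumes W: "is_tec W" "balanced W" and H: "0 < tec_H W" "tec_H W < 1"
    and A: "A^2 + 8*A = 12" "0 \<le> A" and Q_le: "tec_Q W \<le> A"
  shows "tec_Q W * (1 + 3/8 * tec_H W * (A - tec_Q W)) \<le> tec_Q (serial W)"
proof -
  define h Q where "h = tec_H W" and "Q = tec_Q W"
  define u c where "u = 1 - h" and "c = 1 - (Q*h)^2/12"
  have h: "0 < h" "h < 1" and u: "0 < u" "u < 1" using H by (auto simp: h_def u_def)
  have Q: "0 \<le> Q" "Q \<le> A" using tec_Q_nonneg[OF W(1)] Q_le by (simp_all add: Q_def)
  have E: "tec_E W = Q*h*u" using h u by (simp add: Q_def h_def u_def tec_Q_def)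
  have E_ser: "tec_E (serial W) = 2*Q*h*u^2*(1 - Q*h/3)"
    using tec_E_serial_balanced[OF W]
    by (simp add: E flip: h_def u_def) (simp add: field_simps power2_eq_square)
  have H_ser: "1 - tec_H (serial W) = u^2*c"
    using tec_H_serial_balanced[OF W]
    by (simp add: E c_def flip: h_def u_def) (simp add: field_simps power2_eq_square)
  have "Q*h \<le> Q" using Q h by (simp add: mult_left_le)
  then have "Q*h \<le> 2" using Q quetelet_threshold_bounds[OF A] by linarith
  then have "(Q*h)^2 \<le> 2^2" using Q h by (intro power_mono) auto
  then have c: "0 < c" "c \<le> 1" by (simp_all add: c_def)
  have "u^2*c \<le> u^2" using c by (simp add: mult_left_le)
  also have "u^2 < 1" using u by (simp add: power_less_one_iff)
  finally have "u^2*c < 1" .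
  then have denom_pos: "0 < (1 - u^2*c) * (u^2*c)" using u c by simp
  have "Q*u^2 * ((1 - u^2*c) * c * (1 + 3/8*h*(A-Q))) \<le> Q*u^2 * (2*h*(1 - Q*h/3))"
    using serial_gain_polynomial_ineq[OF A h Q] Q
    by (intro mult_left_mono) (simp_all add: c_def u_def)
  then have "Q * (1 + 3/8*h*(A-Q)) * ((1 - u^2*c) * (u^2*c)) \<le> tec_E (serial W)"
    by (simp add: E_ser algebra_simps power2_eq_square)
  moreover have "tec_Q (serial W) = tec_E (serial W) / ((1 - u^2*c) * (u^2*c))"
    unfolding tec_Q_def using H_ser by (simp add: mult.commute)
  ultimately show ?thesis
    unfolding h_def[symmetric] Q_def[symmetric] using denom_pos by (simp add: pos_le_divide_eq)
qed

lemma sqrt7_threshold_root: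
  "(2 * sqrt 7 - 4)^2 + 8 * (2 * sqrt 7 - 4) = (12::real)" "0 \<le> 2 * sqrt 7 - (4::real)"
proof -
  show "(2 * sqrt 7 - 4)^2 + 8 * (2 * sqrt 7 - 4) = (12::real)"
    by (simp add: power2_eq_square algebra_simps)
  have "sqrt 4 \<le> sqrt (7::real)" by (rule real_sqrt_le_mono) simp
  then show "0 \<le> 2 * sqrt 7 - (4::real)" by simp
qed

lemma tec_Q_serial_growth:
  assumes W: "is_tec W" "balanced W" "0 < tec_H W" "tec_H W < 1"
    and \<epsilon>: "0 \<le> \<epsilon>" "tec_Q W \<le> (2 * sqrt 7 - 4) - \<epsilon>"
  shows "tec_Q W * (1 + tec_H W * (3 * \<epsilon> / 8)) \<le> tec_Q (serial W)"
proof -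
  have "tec_H W * \<epsilon> \<le> tec_H W * ((2 * sqrt 7 - 4) - tec_Q W)"
    using W \<epsilon> by (intro mult_left_mono) auto
  then have "tec_H W * (3 * \<epsilon> / 8) \<le> 3/8 * tec_H W * ((2 * sqrt 7 - 4) - tec_Q W)"
    by (simp add: mult.commute)
  then have "tec_Q W * (1 + tec_H W * (3 * \<epsilon> / 8))
      \<le> tec_Q W * (1 + 3/8 * tec_H W * ((2 * sqrt 7 - 4) - tec_Q W))"
    using tec_Q_nonneg[OF W(1)] by (intro mult_left_mono) auto
  also have "\<dots> \<le> tec_Q (serial W)"
    using W \<epsilon> by (intro tec_Q_serial_balanced_ge sqrt7_threshold_root) auto
  finally show ?thesis .
qed

theorem mainTheorem6:
  fixes W :: tec and \<epsilon> :: real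
  assumes "\<epsilon> > 0"
    and "is_tec W" and "balanced W"
    and "0 < tec_H W" and "tec_H W < 1"
    and "tec_Q W \<le> (2 * sqrt 7 - 4) - \<epsilon>"
  shows "tec_Q (serial W) \<ge> tec_Q W * (1 + tec_H W * (3 * \<epsilon> / 8))
       \<and> tec_Q (parallel W) \<ge> tec_Q W * (1 + (1 - tec_H W) * (3 * \<epsilon> / 8))"
proof
  show "tec_Q (serial W) \<ge> tec_Q W * (1 + tec_H W * (3 * \<epsilon> / 8))"
    using assms by (intro tec_Q_serial_growth) auto
  have "tec_Q (tec_flip W) * (1 + tec_H (tec_flip W) * (3 * \<epsilon> / 8))
      \<le> tec_Q (serial (tec_flip W))"
    using assms
    by (intro tec_Q_serial_growth is_tec_flip balanced_flip) (auto simp: tec_H_flip tec_Q_flip)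
  then show "tec_Q (parallel W) \<ge> tec_Q W * (1 + (1 - tec_H W) * (3 * \<epsilon> / 8))"
    using assms by (simp add: tec_Q_parallel tec_H_flip tec_Q_flip)
qed

end
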